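(* Let $P(t)=\binom{r+t}{r}-\binom{r+t-d}{r}$ and let $x\in\mathrm{Hilb}^P(\mathbb{P}^r_k)$ be unstable at level $d$ with $x\in E_{d,[\lambda],\delta}$, where $\lambda=(a_0,\dots,a_r)\in\Gamma(T)$ is indivisible (so $\sum_{i=0}^r a_i=0$) and $\delta>0$. Let $b=\max_i a_i$ and $a=\min_i a_i$. Then the multiplicity $n_{H_x}$ of the hypersurface $H_x$ represented by $x$ satisfies $$\frac{\Vert\lambda\Vert\delta-ad}{b-a}\;\le\; n_{H_x}\;\le\;\frac{rd}{r+1}-\delta\,\frac{a}{\Vert\lambda\Vert}.$$
   Context: Let $k$ be an algebraically closed field, $r\ge1$, $d\ge1$, $S=k[x_0,\dots,x_r]$, $S_d$ its degree-$d$ part. With $P(t)=\binom{r+t}{r}-\binom{r+t-d}{r}$, a point $x$ of $\mathrm{Hilb}^P(\mathbb{P}^r_k)$ is a hypersurface $H_x=V(f)$, $0\ne f\in S_d$, with $d$-th Hilbert point $\phi_d(x)=[f]\in\mathbb{P}(S_d)$. $G=\mathrm{GL}_{r+1}(k)$ acts on $S_1=\mathrm{span}(x_0,\dots,x_r)$ by the standard representation and hence on $S$ and on the Hilbert scheme; $H=\mathrm{SL}_{r+1}(k)$, $T$ its diagonal torus. $\lambda=(a_0,\dots,a_r)\in\mathbb{Z}^{r+1}$, $\sum a_i=0$, denotes $s\mapsto\mathrm{diag}(s^{a_0},\dots,s^{a_r})\in\Gamma(T)$; it multiplies $x_0^{e_0}\cdots x_r^{e_r}$ by $s^{\sum a_ie_i}$.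 $\Vert\cdot\Vert$ is a conjugation-invariant norm on one-parameter subgroups of $G$ equal to the Euclidean norm on diagonal ones. For $\lambda\in\Gamma(H)$, $\mu(\phi_d(x),\lambda)$ is the minimal $i$ such that the $s^i$-weight component of $f$ under $\lambda$ is nonzero. $\Lambda_{x,d}$ is the set of indivisible $\lambda\in\Gamma(H)$ (not an integer multiple $\ge2$ of another) maximizing $\mu(\phi_d(x),\lambda)/\Vert\lambda\Vert$; $x$ is unstable at level $d$ if this maximum is positive. For indivisible $\lambda\in\Gamma(T)$ and $\delta>0$, the Hesselink stratum $E_{d,[\lambda],\delta}$ is the set of $x$ such that $\Lambda_{x,d}$ meets the $G$-conjugacy class $[\lambda]$ and the maximal value of $\mu(\phi_d(x),\cdot)/\Vert\cdot\Vert$ is $\delta$. Multiplicity: for $X=V(f)$ and $e=[1:0:\cdots:0]$, writing $f=\sum_j x_0^{d-j}f_j(x_1,\dots,x_r)$ with $f_j$ homogeneous of degree $j$, $n_{e,X}=\min\{j:f_j\ne0\}$; for a point $p$, $n_{p,X}$ is defined likewise after a linear coordinate change sending $p$ to $e$ (coordinate independent; equal to the degree of the tangent cone at $p$), and $n_X=\max_{p}n_{p,X}$. *)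

theory Defs
  imports "HOL-Computational_Algebra.Polynomial" "HOL-Library.Poly_Mapping"
begin

(* The ring structure is the
  monoid algebra from Poly_Mapping. *)

type_synonym 'k mpoly = "(nat \<Rightarrow>\<^sub>0 nat) \<Rightarrow>\<^sub>0 'k"

definition Xvar :: "nat \<Rightarrow> 'k::comm_ring_1 mpoly" where
  "Xvar i = Poly_Mapping.single (Poly_Mapping.single i 1) 1"

definition monom_of :: "(nat \<Rightarrow>\<^sub>0 nat) \<Rightarrow> 'k::comm_ring_1 mpoly" where
  "monom_of e = Poly_Mapping.single e 1"

definition homog_form :: "nat \<Rightarrow> nat \<Rightarrow> 'k::comm_ring_1 mpoly \<Rightarrow> bool" where
  "homog_form r d f \<longleftrightarrow> f \<noteq> 0 \<and>
     (\<forall>e \<in> Poly_Mapping.keys f. (\<forall>i>r. Poly_Mapping.lookup e i = 0) \<and> (\<Sum>i\<le>r. Poly_Mapping.lookup e i) = d)"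

definition invertible_mat :: "nat \<Rightarrow> (nat \<Rightarrow> nat \<Rightarrow> 'k::field) \<Rightarrow> bool" where
  "invertible_mat r M \<longleftrightarrow> (\<exists>N. \<forall>i\<le>r. \<forall>j\<le>r.
      (\<Sum>l\<le>r. M i l * N l j) = (if i = j then 1 else 0) \<and>
      (\<Sum>l\<le>r. N i l * M l j) = (if i = j then 1 else 0))"

definition lin_subst :: "nat \<Rightarrow> (nat \<Rightarrow> nat \<Rightarrow> 'k::field) \<Rightarrow> 'k mpoly \<Rightarrow> 'k mpoly" where
  "lin_subst r M f = (\<Sum>e\<in>Poly_Mapping.keys f. Poly_Mapping.single 0 (Poly_Mapping.lookup f e) *
       (\<Prod>i\<le>r. (\<Sum>j\<le>r. Poly_Mapping.single 0 (M i j) * Xvar j) ^ Poly_Mapping.lookup e i))"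

(* Weight of the monomial x^e under the diagonal one-parameter subgroup
  s \<mapsto> diag(s^{a_0},...,s^{a_r}). *)
definition weight :: "nat \<Rightarrow> (nat \<Rightarrow> int) \<Rightarrow> (nat \<Rightarrow>\<^sub>0 nat) \<Rightarrow> int" where
  "weight r a e = (\<Sum>i\<le>r. a i * int (Poly_Mapping.lookup e i))"

definition mu_diag :: "nat \<Rightarrow> (nat \<Rightarrow> int) \<Rightarrow> 'k::comm_ring_1 mpoly \<Rightarrow> int" where
  "mu_diag r a f = Min (weight r a ` Poly_Mapping.keys f)"

(* One-parameter subgroups of SL_{r+1}: every one is g lambda_a g^{-1} with lambda_a
  diagonal, sum a_i = 0. mu([f], g lambda_a g^{-1}) = mu([g^{-1} f], lambda_a); we
  parametrize the conjugating element through the substitution matrix M. *)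
definition mu_ops :: "nat \<Rightarrow> (nat \<Rightarrow> nat \<Rightarrow> 'k::field) \<Rightarrow> (nat \<Rightarrow> int) \<Rightarrow> 'k mpoly \<Rightarrow> int" where
  "mu_ops r M a f = mu_diag r a (lin_subst r M f)"

definition onepar_norm :: "nat \<Rightarrow> (nat \<Rightarrow> int) \<Rightarrow> real" where
  "onepar_norm r a = sqrt (\<Sum>i\<le>r. (real_of_int (a i))\<^sup>2)"

definition nontriv_onepar :: "nat \<Rightarrow> (nat \<Rightarrow> int) \<Rightarrow> bool" where
  "nontriv_onepar r a \<longleftrightarrow> (\<Sum>i\<le>r. a i) = 0 \<and> (\<exists>i\<le>r. a i \<noteq> 0)"

definition indivisible :: "nat \<Rightarrow> (nat \<Rightarrow> int) \<Rightarrow> bool" where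
  "indivisible r a \<longleftrightarrow> \<not> (\<exists>m::int. m \<ge> 2 \<and> (\<exists>c. \<forall>i\<le>r. a i = m * c i))"

definition mu_ratio :: "nat \<Rightarrow> (nat \<Rightarrow> nat \<Rightarrow> 'k::field) \<Rightarrow> (nat \<Rightarrow> int) \<Rightarrow> 'k mpoly \<Rightarrow> real" where
  "mu_ratio r M a f = real_of_int (mu_ops r M a f) / onepar_norm r a"

definition max_ratio :: "nat \<Rightarrow> 'k::field mpoly \<Rightarrow> real" where
  "max_ratio r f = (SUP p \<in> {(M, a). invertible_mat r M \<and> nontriv_onepar r a}.
                      mu_ratio r (fst p) (snd p) f)"

definition unstable :: "nat \<Rightarrow> 'k::field mpoly \<Rightarrow> bool" where
  "unstable r f \<longleftrightarrow> max_ratio r f > 0"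

(* x \<in> E_{d,[lambda_a],delta}: the maximum of mu/||.|| equals delta and is attained at a
  conjugate of lambda_a (a indivisible, so that conjugate is indivisible and lies in Lambda_{x,d}). *)
definition in_stratum :: "nat \<Rightarrow> 'k::field mpoly \<Rightarrow> (nat \<Rightarrow> int) \<Rightarrow> real \<Rightarrow> bool" where
  "in_stratum r f a \<delta> \<longleftrightarrow> indivisible r a \<and> nontriv_onepar r a \<and>
     (\<exists>M. invertible_mat r M \<and> (\<forall>M' a'. invertible_mat r M' \<and> nontriv_onepar r a' \<longrightarrow>
          mu_ratio r M' a' f \<le> mu_ratio r M a f) \<and> mu_ratio r M a f = \<delta>)"

(* Multiplicity of V(f) at the point p (nonzero vector of k^{r+1}): change coordinates
  by a matrix M with first column p (so p \<mapsto> e = [1:0:...:0]); n = min{j : f_j \<noteq> 0}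
  where f = \<Sum>_j x_0^{d-j} f_j. *)
definition mult_at :: "nat \<Rightarrow> nat \<Rightarrow> 'k::field mpoly \<Rightarrow> (nat \<Rightarrow> 'k) \<Rightarrow> nat" where
  "mult_at r d f p = (let M = (SOME M. invertible_mat r M \<and> (\<forall>i\<le>r. M i 0 = p i));
                          g = lin_subst r M f
                      in LEAST j. \<exists>e\<in>Poly_Mapping.keys g. Poly_Mapping.lookup e 0 = d - j)"

definition hyp_mult :: "nat \<Rightarrow> nat \<Rightarrow> 'k::field mpoly \<Rightarrow> nat" where
  "hyp_mult r d f = Max {mult_at r d f p | p. \<exists>i\<le>r. p i \<noteq> 0}"

end

theory Submission
  imports Defs
begin

text \<open>
  Choose coordinates in which the destabilizing subgroup is diagonal with weights \<open>a\<close>, and let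
  \<open>m = \<parallel>a\<parallel> \<delta>\<close> be the least \<open>a\<close>-weight of a monomial of \<open>f\<close>.

  Lower bound: let \<open>a\<^sub>i = min a\<close> and let \<open>J\<close> be the degree of \<open>f\<close> in \<open>x\<^sub>i\<close>.  The multiplicity at the
  coordinate point \<open>e\<^sub>i\<close> is at least \<open>d - J\<close>, and a monomial of \<open>x\<^sub>i\<close>-degree \<open>J\<close> has weight at most
  \<open>J min a + (d - J) max a\<close>, which must be at least \<open>m\<close>.

  Upper bound: a point \<open>p\<close> of multiplicity \<open>n\<close> is moved to a coordinate point \<open>e\<^sub>j\<close> by a substitution
  \<open>x\<^sub>i \<mapsto> x\<^sub>i + q\<^sub>i x\<^sub>j\<close> with \<open>a\<^sub>i \<le> a\<^sub>j\<close> whenever \<open>q\<^sub>i \<noteq> 0\<close>; it does not decrease the weights, and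
  afterwards \<open>f\<close> has degree at most \<open>d - n\<close> in \<open>x\<^sub>j\<close>.  Tilting \<open>t a\<close> by the weights
  \<open>(1,\<dots>,1,-r,1,\<dots>,1)\<close> (with \<open>-r\<close> at \<open>j\<close>) gives \<open>\<mu> \<ge> t m + (r+1) n - r d\<close>, and maximality of
  \<open>\<mu>/\<parallel>\<cdot>\<parallel>\<close> at \<open>a\<close>, compared to first order in \<open>1/t\<close>, forces
  \<open>((r+1) n - r d) \<parallel>a\<parallel>\<^sup>2 \<le> -(r+1) m a\<^sub>j \<le> -(r+1) m min a\<close>.
\<close>

definition mpoly_const :: "'k::comm_ring_1 \<Rightarrow> 'k mpoly" where
  "mpoly_const c = Poly_Mapping.single 0 c"

definition subst_monom :: "nat \<Rightarrow> (nat \<Rightarrow> 'k::comm_ring_1 mpoly) \<Rightarrow> (nat \<Rightarrow>\<^sub>0 nat) \<Rightarrow> 'k mpoly" where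
  "subst_monom r h e = (\<Prod>i\<le>r. h i ^ Poly_Mapping.lookup e i)"

text \<open>Variables \<open>x\<^sub>i\<close> with \<open>i > r\<close> are sent to \<open>1\<close>.\<close>

definition subst_vars :: "nat \<Rightarrow> (nat \<Rightarrow> 'k::comm_ring_1 mpoly) \<Rightarrow> 'k mpoly \<Rightarrow> 'k mpoly" where
  "subst_vars r h p =
     (\<Sum>e\<in>Poly_Mapping.keys p. mpoly_const (Poly_Mapping.lookup p e) * subst_monom r h e)"

lemma mpoly_const_add: "mpoly_const (a + b) = mpoly_const a + mpoly_const b"
  by (simp add: mpoly_const_def single_add)

lemma mpoly_const_mult: "mpoly_const (a * b) = mpoly_const a * mpoly_const b"
  by (simp add: mpoly_const_def mult_single)

lemma mpoly_const_0 [simp]: "mpoly_const 0 = 0"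
  by (simp add: mpoly_const_def)

lemma mpoly_const_1 [simp]: "mpoly_const 1 = 1"
  by (simp add: mpoly_const_def)

lemma mpoly_const_sum: "mpoly_const (\<Sum>x\<in>I. F x) = (\<Sum>x\<in>I. mpoly_const (F x))"
  by (induction I rule: infinite_finite_induct) (auto simp: mpoly_const_add)

lemma mpoly_const_mult_Xvar:
  "mpoly_const c * Xvar j = Poly_Mapping.single (Poly_Mapping.single j 1) c"
  by (simp add: mpoly_const_def Xvar_def mult_single)

lemma subst_monom_add: "subst_monom r h (e + e') = subst_monom r h e * subst_monom r h e'"
  by (simp add: subst_monom_def lookup_add power_add prod.distrib)

lemma poly_mapping_sum_single:
  "p = (\<Sum>e\<in>Poly_Mapping.keys p. Poly_Mapping.single e (Poly_Mapping.lookup p e))"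
  by (rule poly_mapping_eqI) (auto simp: lookup_sum lookup_single when_def in_keys_iff)

lemma subst_vars_superset:
  assumes "finite S" "Poly_Mapping.keys p \<subseteq> S"
  shows "subst_vars r h p = (\<Sum>e\<in>S. mpoly_const (Poly_Mapping.lookup p e) * subst_monom r h e)"
  unfolding subst_vars_def
  by (rule sum.mono_neutral_left) (use assms in \<open>auto simp: in_keys_iff\<close>)

lemma subst_vars_0 [simp]: "subst_vars r h 0 = 0"
  by (simp add: subst_vars_def)

lemma subst_vars_single:
  "subst_vars r h (Poly_Mapping.single e c) = mpoly_const c * subst_monom r h e"
  by (simp add: subst_vars_def)

lemma subst_vars_add: "subst_vars r h (p + q) = subst_vars r h p + subst_vars r h q"
proof -
  define S where "S = Poly_Mapping.keys p \<union> Poly_Mapping.keys q"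
  have S: "finite S" by (simp add: S_def)
  have "subst_vars r h (p + q) =
        (\<Sum>e\<in>S. mpoly_const (Poly_Mapping.lookup (p + q) e) * subst_monom r h e)"
    by (rule subst_vars_superset[OF S]) (use keys_add[of p q] in \<open>auto simp: S_def\<close>)
  also have "\<dots> = (\<Sum>e\<in>S. mpoly_const (Poly_Mapping.lookup p e) * subst_monom r h e)
                + (\<Sum>e\<in>S. mpoly_const (Poly_Mapping.lookup q e) * subst_monom r h e)"
    by (simp add: lookup_add mpoly_const_add distrib_right sum.distrib)
  also have "\<dots> = subst_vars r h p + subst_vars r h q"
    using subst_vars_superset[OF S, of p] subst_vars_superset[OF S, of q] by (simp add: S_def)
  finally show ?thesis .
qed

lemma subst_vars_sum: "subst_vars r h (\<Sum>x\<in>I. F x) = (\<Sum>x\<in>I. subst_vars r h (F x))"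
  by (induction I rule: infinite_finite_induct) (auto simp: subst_vars_add)

lemma subst_vars_mult: "subst_vars r h (p * q) = subst_vars r h p * subst_vars r h q"
proof -
  let ?c = "\<lambda>p e. mpoly_const (Poly_Mapping.lookup p e)"
  have "p * q = (\<Sum>e\<in>Poly_Mapping.keys p. Poly_Mapping.single e (Poly_Mapping.lookup p e)) *
                (\<Sum>e'\<in>Poly_Mapping.keys q. Poly_Mapping.single e' (Poly_Mapping.lookup q e'))"
    using poly_mapping_sum_single[of p] poly_mapping_sum_single[of q] by simp
  also have "\<dots> = (\<Sum>e\<in>Poly_Mapping.keys p. \<Sum>e'\<in>Poly_Mapping.keys q.
        Poly_Mapping.single (e + e') (Poly_Mapping.lookup p e * Poly_Mapping.lookup q e'))"
    by (simp add: sum_distrib_left sum_distrib_right mult_single) (rule sum.swap)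
  finally have "subst_vars r h (p * q) = (\<Sum>e\<in>Poly_Mapping.keys p. \<Sum>e'\<in>Poly_Mapping.keys q.
        ?c p e * subst_monom r h e * (?c q e' * subst_monom r h e'))"
    by (simp add: subst_vars_sum subst_vars_single mpoly_const_mult subst_monom_add mult_ac)
  also have "\<dots> = subst_vars r h p * subst_vars r h q"
    by (simp add: subst_vars_def sum_distrib_left sum_distrib_right) (rule sum.swap)
  finally show ?thesis .
qed

lemma subst_vars_const: "subst_vars r h (mpoly_const c) = mpoly_const c"
  by (simp add: mpoly_const_def subst_vars_single subst_monom_def)

lemma subst_vars_1 [simp]: "subst_vars r h 1 = 1"
  using subst_vars_const[of r h 1] by simp

lemma subst_vars_prod: "subst_vars r h (\<Prod>x\<in>I. F x) = (\<Prod>x\<in>I. subst_vars r h (F x))"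
  by (induction I rule: infinite_finite_induct) (auto simp: subst_vars_mult)

lemma subst_vars_power: "subst_vars r h (p ^ n) = subst_vars r h p ^ n"
  by (induction n) (auto simp: subst_vars_mult)

lemma subst_vars_Xvar: "i \<le> r \<Longrightarrow> subst_vars r h (Xvar i) = h i"
proof -
  assume i: "i \<le> r"
  have "subst_monom r h (Poly_Mapping.single i 1) = (\<Prod>l\<le>r. if l = i then h i else 1)"
    unfolding subst_monom_def by (rule prod.cong) (auto simp: lookup_single when_def)
  also have "\<dots> = h i" using i by (simp add: prod.delta)
  finally show ?thesis by (simp add: Xvar_def subst_vars_single)
qed

lemma subst_vars_subst_vars:
  "subst_vars r h' (subst_vars r h p) = subst_vars r (\<lambda>i. subst_vars r h' (h i)) p"
  unfolding subst_vars_def[of r h p]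
  by (simp add: subst_vars_sum subst_vars_mult subst_vars_const subst_monom_def subst_vars_prod
      subst_vars_power subst_vars_def[of r "\<lambda>i. subst_vars r h' (h i)"])

lemma subst_vars_cong: "(\<And>i. i \<le> r \<Longrightarrow> h i = h' i) \<Longrightarrow> subst_vars r h p = subst_vars r h' p"
  unfolding subst_vars_def subst_monom_def
  by (intro sum.cong refl arg_cong2[where f="(*)"] prod.cong) auto

lemma if_mult_1_0: "(if P then 1 else 0) * (x::'a::semiring_1) = (if P then x else 0)"
  by simp

lemma mult_if_1_0: "(x::'a::semiring_1) * (if P then 1 else 0) = (if P then x else 0)"
  by simp

definition lin_form :: "nat \<Rightarrow> (nat \<Rightarrow> nat \<Rightarrow> 'k::field) \<Rightarrow> nat \<Rightarrow> 'k mpoly" where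
  "lin_form r M i = (\<Sum>j\<le>r. mpoly_const (M i j) * Xvar j)"

definition mat_mul :: "nat \<Rightarrow> (nat \<Rightarrow> nat \<Rightarrow> 'k::field) \<Rightarrow> (nat \<Rightarrow> nat \<Rightarrow> 'k) \<Rightarrow> nat \<Rightarrow> nat \<Rightarrow> 'k"
  where "mat_mul r A B i j = (\<Sum>l\<le>r. A i l * B l j)"

definition id_mat :: "nat \<Rightarrow> nat \<Rightarrow> 'k::field" where
  "id_mat i j = (if i = j then 1 else 0)"

lemma lin_subst_eq_subst_vars: "lin_subst r M f = subst_vars r (lin_form r M) f"
  by (simp add: lin_subst_def subst_vars_def subst_monom_def lin_form_def mpoly_const_def)

lemma subst_vars_lin_form:
  "subst_vars r (lin_form r A) (lin_form r B i) = lin_form r (mat_mul r B A) i"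
proof -
  have "subst_vars r (lin_form r A) (lin_form r B i) =
        (\<Sum>j\<le>r. mpoly_const (B i j) * (\<Sum>k\<le>r. mpoly_const (A j k) * Xvar k))"
    unfolding lin_form_def[of r B]
    by (simp add: subst_vars_sum subst_vars_mult subst_vars_const subst_vars_Xvar lin_form_def)
  also have "\<dots> = (\<Sum>j\<le>r. \<Sum>k\<le>r. mpoly_const (B i j * A j k) * Xvar k)"
    by (simp add: sum_distrib_left mpoly_const_mult mult_ac)
  also have "\<dots> = (\<Sum>k\<le>r. \<Sum>j\<le>r. mpoly_const (B i j * A j k) * Xvar k)"
    by (rule sum.swap)
  also have "\<dots> = lin_form r (mat_mul r B A) i"
    by (simp add: lin_form_def mat_mul_def mpoly_const_sum sum_distrib_right)
  finally show ?thesis .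
qed

lemma lin_subst_lin_subst: "lin_subst r A (lin_subst r B f) = lin_subst r (mat_mul r B A) f"
  by (simp add: lin_subst_eq_subst_vars subst_vars_subst_vars subst_vars_lin_form)

lemma lin_subst_cong:
  "(\<And>i j. i \<le> r \<Longrightarrow> j \<le> r \<Longrightarrow> M i j = M' i j) \<Longrightarrow> lin_subst r M f = lin_subst r M' f"
  unfolding lin_subst_eq_subst_vars by (rule subst_vars_cong) (simp add: lin_form_def)

lemma lin_subst_0 [simp]: "lin_subst r M 0 = 0"
  by (simp add: lin_subst_eq_subst_vars)

lemma Xvar_power: "Xvar i ^ n = Poly_Mapping.single (Poly_Mapping.single i n) 1"
  by (induction n) (auto simp: Xvar_def mult_single single_add[symmetric] add.commute)

lemma prod_single_1:
  "(\<Prod>i\<in>I. Poly_Mapping.single (g i) (1::'k::comm_ring_1)) = Poly_Mapping.single (\<Sum>i\<in>I. g i) 1"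
  by (induction I rule: infinite_finite_induct) (auto simp: mult_single)

lemma lin_subst_id_mat:
  assumes "\<forall>e\<in>Poly_Mapping.keys f. \<forall>i>r. Poly_Mapping.lookup e i = 0"
  shows "lin_subst r id_mat f = f"
proof -
  have "lin_subst r id_mat f = subst_vars r Xvar f"
    unfolding lin_subst_eq_subst_vars
    by (rule subst_vars_cong) (simp add: lin_form_def id_mat_def if_distrib[of mpoly_const] if_mult_1_0 cong: if_cong)
  also have "\<dots> = (\<Sum>e\<in>Poly_Mapping.keys f. Poly_Mapping.single e (Poly_Mapping.lookup f e))"
    unfolding subst_vars_def
  proof (rule sum.cong[OF refl])
    fix e assume e: "e \<in> Poly_Mapping.keys f"
    have "(\<Sum>i\<le>r. Poly_Mapping.single i (Poly_Mapping.lookup e i)) = e"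
      by (rule poly_mapping_eqI, rename_tac k, case_tac "k \<le> r")
        (use assms e in \<open>auto simp: lookup_sum lookup_single when_def\<close>)
    then show "mpoly_const (Poly_Mapping.lookup f e) * subst_monom r Xvar e =
               Poly_Mapping.single e (Poly_Mapping.lookup f e)"
      by (simp add: subst_monom_def Xvar_power prod_single_1 mpoly_const_def mult_single)
  qed
  also have "\<dots> = f" by (rule poly_mapping_sum_single[symmetric])
  finally show ?thesis .
qed

lemma mat_mul_assoc: "mat_mul r (mat_mul r X Y) Z = mat_mul r X (mat_mul r Y Z)"
  by (auto simp: fun_eq_iff mat_mul_def sum_distrib_left sum_distrib_right mult.assoc
      intro: sum.swap)

lemma mat_mul_id_left: "i \<le> r \<Longrightarrow> mat_mul r id_mat X i j = X i j"
  by (simp add: mat_mul_def id_mat_def if_mult_1_0)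

lemma mat_mul_id_right: "j \<le> r \<Longrightarrow> mat_mul r X id_mat i j = X i j"
  by (simp add: mat_mul_def id_mat_def mult_if_1_0)

lemma mat_mul_cong_left:
  "(\<And>l. l \<le> r \<Longrightarrow> X i l = X' i l) \<Longrightarrow> mat_mul r X Y i j = mat_mul r X' Y i j"
  by (simp add: mat_mul_def)

lemma mat_mul_cong_right:
  "(\<And>l. l \<le> r \<Longrightarrow> Y l j = Y' l j) \<Longrightarrow> mat_mul r X Y i j = mat_mul r X Y' i j"
  by (simp add: mat_mul_def)

lemma invertible_mat_iff_mat_mul:
  "invertible_mat r M \<longleftrightarrow>
     (\<exists>N. \<forall>i\<le>r. \<forall>j\<le>r. mat_mul r M N i j = id_mat i j \<and> mat_mul r N M i j = id_mat i j)"
  by (simp add: invertible_mat_def mat_mul_def id_mat_def)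

lemma mat_mul_right_inverse_mul:
  assumes "\<forall>i\<le>r. \<forall>j\<le>r. mat_mul r B B' i j = id_mat i j"
    and "\<forall>i\<le>r. \<forall>j\<le>r. mat_mul r A A' i j = id_mat i j" and "i \<le> r" "j \<le> r"
  shows "mat_mul r (mat_mul r A B) (mat_mul r B' A') i j = id_mat i j"
proof -
  have "mat_mul r (mat_mul r A B) (mat_mul r B' A') i j = mat_mul r A (mat_mul r (mat_mul r B B') A') i j"
    by (simp add: mat_mul_assoc)
  also have "\<dots> = mat_mul r A A' i j"
  proof (rule mat_mul_cong_right)
    fix l assume l: "l \<le> r"
    have "mat_mul r (mat_mul r B B') A' l j = mat_mul r id_mat A' l j"
      by (rule mat_mul_cong_left) (use assms(1) l in auto)
    then show "mat_mul r (mat_mul r B B') A' l j = A' l j" using mat_mul_id_left[OF l] by simp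
  qed
  also have "\<dots> = id_mat i j" using assms by auto
  finally show ?thesis .
qed

lemma invertible_mat_mul:
  assumes "invertible_mat r A" "invertible_mat r B"
  shows "invertible_mat r (mat_mul r A B)"
proof -
  obtain A' where A': "\<forall>i\<le>r. \<forall>j\<le>r. mat_mul r A A' i j = id_mat i j \<and> mat_mul r A' A i j = id_mat i j"
    using assms(1) unfolding invertible_mat_iff_mat_mul by blast
  obtain B' where B': "\<forall>i\<le>r. \<forall>j\<le>r. mat_mul r B B' i j = id_mat i j \<and> mat_mul r B' B i j = id_mat i j"
    using assms(2) unfolding invertible_mat_iff_mat_mul by blast
  show ?thesis
    unfolding invertible_mat_iff_mat_mul
    by (rule exI[of _ "mat_mul r B' A'"]) (use A' B' in \<open>auto intro!: mat_mul_right_inverse_mul\<close>)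
qed

lemma lin_subst_through_inverse:
  assumes "\<forall>i\<le>r. \<forall>j\<le>r. mat_mul r M N i j = id_mat i j"
  shows "lin_subst r M' f = lin_subst r (mat_mul r N M') (lin_subst r M f)"
proof -
  have "lin_subst r (mat_mul r N M') (lin_subst r M f) = lin_subst r (mat_mul r (mat_mul r M N) M') f"
    by (simp add: lin_subst_lin_subst mat_mul_assoc)
  also have "\<dots> = lin_subst r (mat_mul r id_mat M') f"
    by (intro lin_subst_cong mat_mul_cong_left) (use assms in auto)
  also have "\<dots> = lin_subst r M' f"
    by (rule lin_subst_cong) (rule mat_mul_id_left)
  finally show ?thesis by simp
qed

lemma mat_mul_inverse_col:
  assumes "\<forall>i\<le>r. \<forall>j\<le>r. mat_mul r N M i j = id_mat i j"
    and "\<And>l. l \<le> r \<Longrightarrow> Y l j = M l k" and "i \<le> r" "k \<le> r"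
  shows "mat_mul r N Y i j = id_mat i k"
  using assms by (simp add: mat_mul_def)

lemma invertible_mat_col_nonzero:
  assumes "invertible_mat r M" "k \<le> r"
  shows "\<exists>i\<le>r. M i k \<noteq> 0"
proof (rule ccontr)
  assume "\<not> ?thesis"
  moreover obtain N where "mat_mul r N M k k = id_mat k k"
    using assms unfolding invertible_mat_iff_mat_mul by blast
  ultimately show False by (simp add: mat_mul_def id_mat_def)
qed

lemma invertible_mat_surj:
  assumes "invertible_mat r M"
  obtains q where "\<And>i. i \<le> r \<Longrightarrow> (\<Sum>k\<le>r. M i k * q k) = p i"
proof -
  obtain N where N: "\<forall>i\<le>r. \<forall>j\<le>r. mat_mul r M N i j = id_mat i j"
    using assms unfolding invertible_mat_iff_mat_mul by blast
  define q where "q k = (\<Sum>l\<le>r. N k l * p l)" for k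
  have "(\<Sum>k\<le>r. M i k * q k) = p i" if "i \<le> r" for i
  proof -
    have "(\<Sum>k\<le>r. M i k * q k) = (\<Sum>l\<le>r. mat_mul r M N i l * p l)"
      unfolding q_def mat_mul_def
      by (simp add: sum_distrib_left sum_distrib_right mult.assoc) (rule sum.swap)
    also have "\<dots> = (\<Sum>l\<le>r. id_mat i l * p l)" using N that by (intro sum.cong) auto
    also have "\<dots> = p i" using that by (simp add: id_mat_def if_mult_1_0)
    finally show ?thesis .
  qed
  then show ?thesis by (rule that)
qed

definition replace_col :: "nat \<Rightarrow> (nat \<Rightarrow> 'k::field) \<Rightarrow> nat \<Rightarrow> nat \<Rightarrow> 'k" where
  "replace_col j v i l = (if l = j then v i else id_mat i l)"

lemma mat_mul_replace_col:
  assumes j: "j \<le> r" and vw: "v j * w j = 1" and w: "\<And>i. i \<noteq> j \<Longrightarrow> w i = - v i * w j"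
    and i: "i \<le> r" and l: "l \<le> r"
  shows "mat_mul r (replace_col j v) (replace_col j w) i l = id_mat i l"
proof (cases "l = j")
  case False
  have "mat_mul r (replace_col j v) (replace_col j w) i l = mat_mul r (replace_col j v) id_mat i l"
    by (rule mat_mul_cong_right) (use False in \<open>simp add: replace_col_def\<close>)
  also have "\<dots> = id_mat i l"
    using mat_mul_id_right[OF l, of "replace_col j v" i] False by (simp add: replace_col_def)
  finally show ?thesis .
next
  case True
  have "mat_mul r (replace_col j v) (replace_col j w) i l = (\<Sum>m\<le>r. replace_col j v i m * w m)"
    using True by (simp add: mat_mul_def replace_col_def)
  also have "\<dots> = v i * w j + (\<Sum>m\<in>{..r}-{j}. replace_col j v i m * w m)"
    using j by (simp add: sum.remove replace_col_def)
  also have "(\<Sum>m\<in>{..r}-{j}. replace_col j v i m * w m) = (\<Sum>m\<in>{..r}-{j}. if m = i then w m else 0)"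
    by (rule sum.cong) (auto simp: replace_col_def id_mat_def)
  also have "\<dots> = (if i = j then 0 else w i)" using i by (simp add: sum.delta)
  finally show ?thesis
    using True vw w[of i] by (auto simp: id_mat_def)
qed

lemma invertible_replace_col:
  assumes j: "j \<le> r" and vj: "v j \<noteq> 0"
  shows "invertible_mat r (replace_col j v)"
  unfolding invertible_mat_iff_mat_mul
proof (intro exI allI impI conjI)
  define w where "w i = (if i = j then 1 / v j else - v i / v j)" for i
  fix i l assume i: "i \<le> r" and l: "l \<le> r"
  show "mat_mul r (replace_col j v) (replace_col j w) i l = id_mat i l"
    by (rule mat_mul_replace_col[OF j _ _ i l]) (use vj in \<open>auto simp: w_def\<close>)
  show "mat_mul r (replace_col j w) (replace_col j v) i l = id_mat i l"
    by (rule mat_mul_replace_col[OF j _ _ i l]) (use vj in \<open>auto simp: w_def field_simps\<close>)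
qed

definition swap_0 :: "nat \<Rightarrow> nat \<Rightarrow> nat" where
  "swap_0 k i = (if i = 0 then k else if i = k then 0 else i)"

definition swap_mat :: "nat \<Rightarrow> nat \<Rightarrow> nat \<Rightarrow> 'k::field" where
  "swap_mat k i l = id_mat (swap_0 k i) l"

lemma invertible_swap_mat:
  assumes k: "k \<le> r"
  shows "invertible_mat r (swap_mat k :: nat \<Rightarrow> nat \<Rightarrow> 'k::field)"
proof -
  have "mat_mul r (swap_mat k) (swap_mat k) i l = (id_mat i l :: 'k)" if "i \<le> r" for i l
  proof -
    have "mat_mul r (swap_mat k) (swap_mat k) i l =
          (\<Sum>m\<le>r. if m = swap_0 k i then (id_mat (swap_0 k m) l :: 'k) else 0)"
      unfolding mat_mul_def by (rule sum.cong) (auto simp: swap_mat_def id_mat_def)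
    also have "\<dots> = id_mat i l" using k that by (simp add: swap_0_def)
    finally show ?thesis .
  qed
  then show ?thesis unfolding invertible_mat_iff_mat_mul by blast
qed

lemma exists_invertible_mat_col_0:
  assumes "\<exists>i\<le>r. p i \<noteq> (0::'k::field)"
  shows "\<exists>M. invertible_mat r M \<and> (\<forall>i\<le>r. M i 0 = p i)"
proof -
  obtain k where k: "k \<le> r" "p k \<noteq> 0" using assms by blast
  define M where "M = mat_mul r (replace_col k p) (swap_mat k)"
  have "invertible_mat r M"
    unfolding M_def by (rule invertible_mat_mul[OF invertible_replace_col[of k r p, OF k] invertible_swap_mat[OF k(1)]])
  moreover have "M i 0 = p i" if "i \<le> r" for i
  proof -
    have "M i 0 = (\<Sum>l\<le>r. if l = k then replace_col k p i l else 0)"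
      unfolding M_def mat_mul_def by (rule sum.cong) (auto simp: swap_mat_def id_mat_def swap_0_def)
    also have "\<dots> = p i" using k by (simp add: replace_col_def)
    finally show ?thesis .
  qed
  ultimately show ?thesis by blast
qed

section \<open>Monomial weights of substituted polynomials\<close>

definition additive_grading :: "((nat \<Rightarrow>\<^sub>0 nat) \<Rightarrow> int) \<Rightarrow> bool" where
  "additive_grading \<phi> \<longleftrightarrow> (\<forall>x y. \<phi> (x + y) = \<phi> x + \<phi> y)"

definition graded_ge :: "((nat \<Rightarrow>\<^sub>0 nat) \<Rightarrow> int) \<Rightarrow> int \<Rightarrow> 'k::comm_ring_1 mpoly set" where
  "graded_ge \<phi> w = {p. \<forall>e\<in>Poly_Mapping.keys p. w \<le> \<phi> e}"

lemma additive_grading_0: "additive_grading \<phi> \<Longrightarrow> \<phi> 0 = 0"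
  unfolding additive_grading_def by (metis add.right_neutral add_cancel_right_right)

lemma graded_ge_0 [simp]: "0 \<in> graded_ge \<phi> w"
  by (simp add: graded_ge_def)

lemma graded_ge_add: "p \<in> graded_ge \<phi> w \<Longrightarrow> q \<in> graded_ge \<phi> w \<Longrightarrow> p + q \<in> graded_ge \<phi> w"
  using keys_add[of p q] by (auto simp: graded_ge_def)

lemma graded_ge_sum:
  "(\<And>x. x \<in> I \<Longrightarrow> F x \<in> graded_ge \<phi> w) \<Longrightarrow> (\<Sum>x\<in>I. F x) \<in> graded_ge \<phi> w"
  by (induction I rule: infinite_finite_induct) (auto intro: graded_ge_add)

lemma graded_ge_mono: "p \<in> graded_ge \<phi> w \<Longrightarrow> w' \<le> w \<Longrightarrow> p \<in> graded_ge \<phi> w'"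
  by (auto simp: graded_ge_def)

lemma graded_ge_mult:
  "additive_grading \<phi> \<Longrightarrow> p \<in> graded_ge \<phi> w \<Longrightarrow> q \<in> graded_ge \<phi> v \<Longrightarrow> p * q \<in> graded_ge \<phi> (w + v)"
  using keys_mult[of p q] unfolding graded_ge_def additive_grading_def by (fastforce intro: add_mono)

lemma graded_ge_const: "additive_grading \<phi> \<Longrightarrow> mpoly_const c \<in> graded_ge \<phi> 0"
  by (auto simp: graded_ge_def mpoly_const_def additive_grading_0 split: if_splits)

lemma graded_ge_prod:
  assumes "additive_grading \<phi>" "\<And>i. i \<in> I \<Longrightarrow> F i \<in> graded_ge \<phi> (c i)"
  shows "(\<Prod>i\<in>I. F i) \<in> graded_ge \<phi> (\<Sum>i\<in>I. c i)"
  using assms(2)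
proof (induction I rule: infinite_finite_induct)
  case (insert x F)
  then show ?case by (auto intro: graded_ge_mult[OF assms(1)])
qed (use graded_ge_const[OF assms(1), of 1] in simp_all)

lemma graded_ge_power:
  "additive_grading \<phi> \<Longrightarrow> p \<in> graded_ge \<phi> w \<Longrightarrow> p ^ n \<in> graded_ge \<phi> (int n * w)"
  using graded_ge_prod[of \<phi> "{..<n}" "\<lambda>_. p" "\<lambda>_. w"] by simp

lemma graded_ge_subst_vars:
  assumes \<phi>: "additive_grading \<phi>" and h: "\<And>i. i \<le> r \<Longrightarrow> h i \<in> graded_ge \<phi> (c i)"
    and f: "\<And>e. e \<in> Poly_Mapping.keys f \<Longrightarrow> w \<le> (\<Sum>i\<le>r. c i * int (Poly_Mapping.lookup e i))"
  shows "subst_vars r h f \<in> graded_ge \<phi> w"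
  unfolding subst_vars_def
proof (rule graded_ge_sum)
  fix e assume e: "e \<in> Poly_Mapping.keys f"
  have "subst_monom r h e \<in> graded_ge \<phi> (\<Sum>i\<le>r. int (Poly_Mapping.lookup e i) * c i)"
    unfolding subst_monom_def by (rule graded_ge_prod[OF \<phi>]) (use graded_ge_power[OF \<phi>] h in auto)
  then have "mpoly_const (Poly_Mapping.lookup f e) * subst_monom r h e
               \<in> graded_ge \<phi> (0 + (\<Sum>i\<le>r. int (Poly_Mapping.lookup e i) * c i))"
    by (rule graded_ge_mult[OF \<phi> graded_ge_const[OF \<phi>]])
  then show "mpoly_const (Poly_Mapping.lookup f e) * subst_monom r h e \<in> graded_ge \<phi> w"
    by (rule graded_ge_mono) (use f[OF e] in \<open>simp add: mult.commute\<close>)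
qed

lemma graded_ge_lin_subst:
  assumes \<phi>: "additive_grading \<phi>"
    and M: "\<And>i j. i \<le> r \<Longrightarrow> j \<le> r \<Longrightarrow> M i j \<noteq> 0 \<Longrightarrow> c i \<le> \<phi> (Poly_Mapping.single j 1)"
    and f: "\<And>e. e \<in> Poly_Mapping.keys f \<Longrightarrow> w \<le> (\<Sum>i\<le>r. c i * int (Poly_Mapping.lookup e i))"
  shows "\<forall>e\<in>Poly_Mapping.keys (lin_subst r M f). w \<le> \<phi> e"
proof -
  have "lin_form r M i \<in> graded_ge \<phi> (c i)" if "i \<le> r" for i
    unfolding lin_form_def mpoly_const_mult_Xvar
    by (rule graded_ge_sum) (use M that in \<open>auto simp: graded_ge_def\<close>)
  then have "lin_subst r M f \<in> graded_ge \<phi> w"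
    unfolding lin_subst_eq_subst_vars by (rule graded_ge_subst_vars[OF \<phi> _ f])
  then show ?thesis by (simp add: graded_ge_def)
qed

lemma additive_grading_weight: "additive_grading (weight r a)"
  by (simp add: additive_grading_def weight_def lookup_add sum.distrib algebra_simps)

lemma additive_grading_neg_lookup: "additive_grading (\<lambda>e. - int (Poly_Mapping.lookup e j))"
  by (simp add: additive_grading_def lookup_add)

lemma weight_single: "k \<le> r \<Longrightarrow> weight r a (Poly_Mapping.single k 1) = a k"
  unfolding weight_def by (simp add: lookup_single when_def if_distrib cong: if_cong)

lemma weight_lin_subst_ge:
  assumes "\<And>i k. i \<le> r \<Longrightarrow> k \<le> r \<Longrightarrow> u i k \<noteq> 0 \<Longrightarrow> a i \<le> a k"
    and "\<forall>e\<in>Poly_Mapping.keys g. w \<le> weight r a e"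
  shows "\<forall>e\<in>Poly_Mapping.keys (lin_subst r u g). w \<le> weight r a e"
  by (rule graded_ge_lin_subst[OF additive_grading_weight, where c=a])
    (use assms weight_single[of _ r a] in \<open>auto simp: weight_def\<close>)

lemma lin_subst_left_inverse:
  assumes "\<forall>e\<in>Poly_Mapping.keys f. \<forall>i>r. Poly_Mapping.lookup e i = 0"
    and "\<forall>i\<le>r. \<forall>j\<le>r. mat_mul r M N i j = id_mat i j"
  shows "lin_subst r N (lin_subst r M f) = f"
proof -
  have "lin_subst r N (lin_subst r M f) = lin_subst r id_mat f"
    unfolding lin_subst_lin_subst by (rule lin_subst_cong) (use assms(2) in auto)
  also have "\<dots> = f" by (rule lin_subst_id_mat[OF assms(1)])
  finally show ?thesis .
qed

lemma homog_form_lin_subst: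
  assumes f: "homog_form r d f" and M: "invertible_mat r M"
  shows "homog_form r d (lin_subst r M f)"
proof -
  let ?g = "lin_subst r M f"
  have supp: "\<forall>e\<in>Poly_Mapping.keys f. \<forall>i>r. Poly_Mapping.lookup e i = 0"
    and deg: "\<And>e. e \<in> Poly_Mapping.keys f \<Longrightarrow> weight r (\<lambda>_. 1) e = int d"
    using f by (auto simp: homog_form_def weight_def simp flip: of_nat_sum)
  obtain N where "\<forall>i\<le>r. \<forall>j\<le>r. mat_mul r M N i j = id_mat i j"
    using M unfolding invertible_mat_iff_mat_mul by blast
  then have "?g \<noteq> 0"
    using lin_subst_left_inverse[OF supp] f by (metis homog_form_def lin_subst_0)
  moreover have "Poly_Mapping.lookup e i = 0" if "e \<in> Poly_Mapping.keys ?g" "r < i" for e i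
    using graded_ge_lin_subst[OF additive_grading_neg_lookup[of i], where c="\<lambda>_. 0" and w=0
        and r=r and M=M and f=f] that by (auto simp: lookup_single when_def)
  moreover have "weight r (\<lambda>_. 1) e = int d" if "e \<in> Poly_Mapping.keys ?g" for e
  proof -
    have "int d \<le> weight r (\<lambda>_. 1) e"
      using weight_lin_subst_ge[of r M "\<lambda>_. 1" f "int d"] deg that by auto
    moreover have "- int d \<le> weight r (\<lambda>_. - 1) e"
      using weight_lin_subst_ge[of r M "\<lambda>_. - 1" f "- int d"] deg that
      by (auto simp: weight_def sum_negf)
    ultimately show ?thesis by (simp add: weight_def sum_negf)
  qed
  ultimately show ?thesis
    by (auto simp: homog_form_def weight_def simp flip: of_nat_sum)
qed

definition var_degree :: "nat \<Rightarrow> 'k::comm_ring_1 mpoly \<Rightarrow> nat" where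
  "var_degree j g = Max (insert 0 ((\<lambda>e. Poly_Mapping.lookup e j) ` Poly_Mapping.keys g))"

lemma lookup_le_var_degree: "e \<in> Poly_Mapping.keys g \<Longrightarrow> Poly_Mapping.lookup e j \<le> var_degree j g"
  by (simp add: var_degree_def)

lemma var_degree_le_iff:
  "var_degree j g \<le> D \<longleftrightarrow> (\<forall>e\<in>Poly_Mapping.keys g. Poly_Mapping.lookup e j \<le> D)"
  by (simp add: var_degree_def)

lemma var_degree_attained:
  assumes "g \<noteq> 0"
  obtains e where "e \<in> Poly_Mapping.keys g" "Poly_Mapping.lookup e j = var_degree j g"
proof -
  obtain e0 where e0: "e0 \<in> Poly_Mapping.keys g" using assms by fastforce
  have "var_degree j g \<in> insert 0 ((\<lambda>e. Poly_Mapping.lookup e j) ` Poly_Mapping.keys g)"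
    unfolding var_degree_def by (rule Max_in) auto
  then show ?thesis
    using that e0 lookup_le_var_degree[OF e0, of j] by fastforce
qed

lemma var_degree_le_homog:
  assumes "homog_form r d g" "j \<le> r"
  shows "var_degree j g \<le> d"
  unfolding var_degree_le_iff
proof
  fix e assume "e \<in> Poly_Mapping.keys g"
  then have "(\<Sum>i\<le>r. Poly_Mapping.lookup e i) = d" using assms(1) by (simp add: homog_form_def)
  then show "Poly_Mapping.lookup e j \<le> d"
    using member_le_sum[of j "{..r}" "Poly_Mapping.lookup e"] assms(2) by simp
qed

text \<open>The hypothesis says that \<open>x\<^sub>j\<close> occurs only in the image of \<open>x\<^sub>i\<^sub>0\<close>.\<close>

lemma var_degree_lin_subst_le:
  assumes "i0 \<le> r" and K: "\<And>i. i \<le> r \<Longrightarrow> i \<noteq> i0 \<Longrightarrow> K i j = 0"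
  shows "var_degree j (lin_subst r K g) \<le> var_degree i0 g"
proof -
  let ?c = "\<lambda>i. if i = i0 then -1 else 0 :: int"
  have "\<forall>e\<in>Poly_Mapping.keys (lin_subst r K g).
          - int (var_degree i0 g) \<le> - int (Poly_Mapping.lookup e j)"
  proof (rule graded_ge_lin_subst[OF additive_grading_neg_lookup, where c="?c"])
    fix i k assume "i \<le> r" "k \<le> r" "K i k \<noteq> 0"
    then show "?c i \<le> - int (Poly_Mapping.lookup (Poly_Mapping.single k 1) j)"
      using K by (auto simp: lookup_single when_def)
  next
    fix e assume e: "e \<in> Poly_Mapping.keys g"
    have "(\<Sum>i\<le>r. ?c i * int (Poly_Mapping.lookup e i)) = - int (Poly_Mapping.lookup e i0)"
      by (subst sum.cong[OF refl, where h="\<lambda>i. if i = i0 then - int (Poly_Mapping.lookup e i0) else 0"])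
        (use assms(1) in auto)
    then show "- int (var_degree i0 g) \<le> (\<Sum>i\<le>r. ?c i * int (Poly_Mapping.lookup e i))"
      using lookup_le_var_degree[OF e, of i0] by simp
  qed
  then show ?thesis by (simp add: var_degree_le_iff)
qed

lemma var_degree_lin_subst_same_col:
  assumes M: "invertible_mat r M" and j: "j \<le> r" and col: "\<And>l. l \<le> r \<Longrightarrow> M' l j' = M l j"
  shows "var_degree j' (lin_subst r M' f) \<le> var_degree j (lin_subst r M f)"
proof -
  obtain N where N: "\<forall>i\<le>r. \<forall>j\<le>r. mat_mul r M N i j = id_mat i j \<and> mat_mul r N M i j = id_mat i j"
    using M unfolding invertible_mat_iff_mat_mul by blast
  have "var_degree j' (lin_subst r M' f) = var_degree j' (lin_subst r (mat_mul r N M') (lin_subst r M f))"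
    using lin_subst_through_inverse[of r M N M' f] N by simp
  also have "\<dots> \<le> var_degree j (lin_subst r M f)"
    by (rule var_degree_lin_subst_le[OF j])
      (use mat_mul_inverse_col[of r N M M' j' j] N col j in \<open>auto simp: id_mat_def\<close>)
  finally show ?thesis .
qed

section \<open>Multiplicity of a hypersurface at a point\<close>

lemma mult_at_eq_var_degree:
  assumes f: "homog_form r d f" and p: "\<exists>i\<le>r. p i \<noteq> 0"
  obtains M where "invertible_mat r M" "\<forall>i\<le>r. M i 0 = p i"
    "mult_at r d f p = d - var_degree 0 (lin_subst r M f)"
proof -
  define M where "M = (SOME M. invertible_mat r M \<and> (\<forall>i\<le>r. M i 0 = p i))"
  have M: "invertible_mat r M" "\<forall>i\<le>r. M i 0 = p i"
    using someI_ex[OF exists_invertible_mat_col_0[OF p]] unfolding M_def by auto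
  define g where "g = lin_subst r M f"
  have g: "homog_form r d g" unfolding g_def by (rule homog_form_lin_subst[OF f M(1)])
  then have D: "var_degree 0 g \<le> d" by (rule var_degree_le_homog) simp
  obtain e where e: "e \<in> Poly_Mapping.keys g" "Poly_Mapping.lookup e 0 = var_degree 0 g"
    using var_degree_attained g unfolding homog_form_def by blast
  have "(LEAST j. \<exists>e\<in>Poly_Mapping.keys g. Poly_Mapping.lookup e 0 = d - j) = d - var_degree 0 g"
  proof (rule Least_equality)
    show "\<exists>e\<in>Poly_Mapping.keys g. Poly_Mapping.lookup e 0 = d - (d - var_degree 0 g)"
      using e D by auto
  next
    fix j assume "\<exists>e\<in>Poly_Mapping.keys g. Poly_Mapping.lookup e 0 = d - j"
    then show "d - var_degree 0 g \<le> j" using lookup_le_var_degree[of _ g 0] by fastforce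
  qed
  then have "mult_at r d f p = d - var_degree 0 g"
    unfolding mult_at_def M_def g_def Let_def .
  with M show ?thesis unfolding g_def using that by blast
qed

lemma mult_at_le_degree:
  assumes "homog_form r d f" "\<exists>i\<le>r. p i \<noteq> 0"
  shows "mult_at r d f p \<le> d"
  by (rule mult_at_eq_var_degree[OF assms]) simp

lemma mult_at_le_hyp_mult:
  assumes "homog_form r d f" "\<exists>i\<le>r. p i \<noteq> 0"
  shows "mult_at r d f p \<le> hyp_mult r d f"
proof -
  have "finite {mult_at r d f p | p. \<exists>i\<le>r. p i \<noteq> 0}"
    by (rule finite_subset[of _ "{..d}"]) (use mult_at_le_degree[OF assms(1)] in auto)
  then show ?thesis unfolding hyp_mult_def by (rule Max_ge) (use assms(2) in blast)
qed

lemma hyp_mult_attained: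
  assumes "homog_form r d f"
  obtains p where "\<exists>i\<le>r. p i \<noteq> 0" "hyp_mult r d f = mult_at r d f p"
proof -
  let ?S = "{mult_at r d f p | p. \<exists>i\<le>r. p i \<noteq> 0}"
  have "finite ?S"
    by (rule finite_subset[of _ "{..d}"]) (use mult_at_le_degree[OF assms(1)] in auto)
  moreover have "mult_at r d f (\<lambda>_. 1) \<in> ?S" by (auto intro!: exI[of _ "\<lambda>_. 1"])
  ultimately have "hyp_mult r d f \<in> ?S" unfolding hyp_mult_def by (intro Max_in) auto
  with that show ?thesis by blast
qed

lemma mu_diag_le_weight: "e \<in> Poly_Mapping.keys g \<Longrightarrow> mu_diag r a g \<le> weight r a e"
  by (simp add: mu_diag_def)

lemma weight_tilt: "weight r (\<lambda>i. t * a i + b i) e = t * weight r a e + weight r b e"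
  by (simp add: weight_def algebra_simps sum.distrib sum_distrib_left)

lemma onepar_norm_pos: "nontriv_onepar r a \<Longrightarrow> onepar_norm r a > 0"
proof -
  assume "nontriv_onepar r a"
  then obtain i where i: "i \<le> r" "a i \<noteq> 0" by (auto simp: nontriv_onepar_def)
  have "0 < (real_of_int (a i))\<^sup>2" using i by simp
  also have "\<dots> \<le> (\<Sum>l\<le>r. (real_of_int (a l))\<^sup>2)" by (rule member_le_sum) (use i in auto)
  finally show ?thesis unfolding onepar_norm_def by simp
qed

lemma onepar_norm_sq: "(onepar_norm r a)\<^sup>2 = real_of_int (\<Sum>i\<le>r. (a i)\<^sup>2)"
  unfolding onepar_norm_def by (simp add: sum_nonneg)

lemma Min_less_Max_of_nontriv:
  assumes "nontriv_onepar r a"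
  shows "Min (a ` {..r}) < Max (a ` {..r})"
proof (rule ccontr)
  define A where "A = Min (a ` {..r})"
  assume le: "\<not> A < Max (a ` {..r})"
  have "A \<le> a i \<and> a i \<le> Max (a ` {..r})" if "i \<le> r" for i
    using that unfolding A_def by simp
  with le have const: "\<forall>i\<le>r. a i = A" by (meson leI order_antisym order_trans)
  then have "(\<Sum>i\<le>r. a i) = (int r + 1) * A" by simp
  then show False using assms const by (auto simp: nontriv_onepar_def)
qed

section \<open>The lower bound\<close>

lemma mult_at_col_ge:
  assumes f: "homog_form r d f" and M: "invertible_mat r M" and i0: "i0 \<le> r"
  shows "d - var_degree i0 (lin_subst r M f) \<le> mult_at r d f (\<lambda>i. M i i0)"
proof -
  obtain M1 where col: "\<forall>i\<le>r. M1 i 0 = M i i0"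
    and n: "mult_at r d f (\<lambda>i. M i i0) = d - var_degree 0 (lin_subst r M1 f)"
    using mult_at_eq_var_degree[OF f invertible_mat_col_nonzero[OF M i0]] by blast
  have "var_degree 0 (lin_subst r M1 f) \<le> var_degree i0 (lin_subst r M f)"
    by (rule var_degree_lin_subst_same_col[OF M i0]) (use col in simp)
  then show ?thesis unfolding n by linarith
qed

lemma weight_le_of_degree:
  assumes e: "(\<Sum>i\<le>r. Poly_Mapping.lookup e i) = d" and i0: "i0 \<le> r" and B: "\<And>i. i \<le> r \<Longrightarrow> a i \<le> B"
  shows "weight r a e \<le> a i0 * Poly_Mapping.lookup e i0 + B * (int d - Poly_Mapping.lookup e i0)"
proof -
  have "weight r a e = a i0 * Poly_Mapping.lookup e i0 + (\<Sum>i\<in>{..r}-{i0}. a i * Poly_Mapping.lookup e i)"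
    unfolding weight_def using i0 by (simp add: sum.remove)
  also have "\<dots> \<le> a i0 * Poly_Mapping.lookup e i0 + (\<Sum>i\<in>{..r}-{i0}. B * Poly_Mapping.lookup e i)"
    using B by (auto intro!: sum_mono mult_right_mono)
  also have "(\<Sum>i\<in>{..r}-{i0}. B * int (Poly_Mapping.lookup e i)) = B * (int d - Poly_Mapping.lookup e i0)"
    using e i0 by (simp add: sum_distrib_left[symmetric] sum.remove flip: of_nat_sum)
  finally show ?thesis .
qed

lemma mu_ops_le_hyp_mult:
  assumes f: "homog_form r d f" and M: "invertible_mat r M"
  shows "mu_ops r M a f - Min (a ` {..r}) * int d
           \<le> (Max (a ` {..r}) - Min (a ` {..r})) * int (hyp_mult r d f)"
proof -
  define A where "A = Min (a ` {..r})"
  define B where "B = Max (a ` {..r})"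
  have "A \<in> a ` {..r}" unfolding A_def by (rule Min_in) auto
  then obtain i0 where i0: "i0 \<le> r" "a i0 = A" by auto
  have AB: "A \<le> B" using i0 unfolding B_def by (auto simp: Max_ge_iff)
  define g where "g = lin_subst r M f"
  have g: "homog_form r d g" unfolding g_def by (rule homog_form_lin_subst[OF f M])
  define J where "J = var_degree i0 g"
  have Jd: "J \<le> d" unfolding J_def by (rule var_degree_le_homog[OF g i0(1)])
  obtain e where e: "e \<in> Poly_Mapping.keys g" "Poly_Mapping.lookup e i0 = J"
    using var_degree_attained g unfolding J_def homog_form_def by blast
  have "mu_ops r M a f \<le> weight r a e"
    unfolding mu_ops_def g_def[symmetric] by (rule mu_diag_le_weight[OF e(1)])
  also have "\<dots> \<le> A * int J + B * (int d - int J)"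
    using weight_le_of_degree[where e=e and d=d and a=a and B=B and r=r, OF _ i0(1)] g e i0
    unfolding B_def
    by (auto simp: homog_form_def)
  finally have "mu_ops r M a f - A * int d \<le> (B - A) * int (d - J)"
    using Jd by (simp add: algebra_simps of_nat_diff)
  also have "\<dots> \<le> (B - A) * int (hyp_mult r d f)"
  proof (rule mult_left_mono)
    have "d - J \<le> mult_at r d f (\<lambda>i. M i i0)"
      unfolding J_def g_def by (rule mult_at_col_ge[OF f M i0(1)])
    also have "\<dots> \<le> hyp_mult r d f"
      by (rule mult_at_le_hyp_mult[OF f invertible_mat_col_nonzero[OF M i0(1)]])
    finally show "int (d - J) \<le> int (hyp_mult r d f)" by simp
  qed (use AB in simp)
  finally show ?thesis unfolding A_def B_def .
qed

lemma hyp_mult_lower_bound: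
  assumes f: "homog_form r d f" and M: "invertible_mat r M" and a: "nontriv_onepar r a"
  shows "(onepar_norm r a * mu_ratio r M a f - of_int (Min (a ` {..r})) * real d)
           / of_int (Max (a ` {..r}) - Min (a ` {..r})) \<le> real (hyp_mult r d f)"
proof -
  have "onepar_norm r a * mu_ratio r M a f = of_int (mu_ops r M a f)"
    using onepar_norm_pos[OF a] by (simp add: mu_ratio_def)
  moreover have "0 < Max (a ` {..r}) - Min (a ` {..r})"
    using Min_less_Max_of_nontriv[OF a] by simp
  moreover have "real_of_int (mu_ops r M a f) - of_int (Min (a ` {..r})) * real d
      \<le> of_int (Max (a ` {..r}) - Min (a ` {..r})) * real (hyp_mult r d f)"
    using mu_ops_le_hyp_mult[OF f M, of a] unfolding of_int_le_iff[symmetric, where 'a=real] by simp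
  ultimately show ?thesis by (simp add: pos_divide_le_eq mult.commute)
qed

section \<open>The upper bound\<close>

lemma exists_subst_low_var_degree:
  assumes f: "homog_form r d f" and M0: "invertible_mat r M0" and p: "\<exists>i\<le>r. p i \<noteq> 0"
  obtains M2 j where "invertible_mat r M2" "j \<le> r"
    "\<forall>e\<in>Poly_Mapping.keys (lin_subst r M2 f). mu_ops r M0 a f \<le> weight r a e"
    "var_degree j (lin_subst r M2 f) \<le> d - mult_at r d f p"
proof -
  obtain q where M0q: "\<And>i. i \<le> r \<Longrightarrow> (\<Sum>k\<le>r. M0 i k * q k) = p i"
    using invertible_mat_surj[OF M0] by blast
  obtain M1 where M1: "invertible_mat r M1" and col: "\<forall>i\<le>r. M1 i 0 = p i"
    and n: "mult_at r d f p = d - var_degree 0 (lin_subst r M1 f)"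
    using mult_at_eq_var_degree[OF f p] by blast
  define S where "S = {i. i \<le> r \<and> q i \<noteq> 0}"
  have "S \<noteq> {}"
    using p M0q by (force simp: S_def)
  then have "Max (a ` S) \<in> a ` S" by (intro Max_in) (auto simp: S_def)
  then obtain j where j: "j \<le> r" "q j \<noteq> 0" "a j = Max (a ` S)" by (auto simp: S_def)
  have j_max: "a i \<le> a j" if "i \<le> r" "q i \<noteq> 0" for i
    unfolding j(3) by (rule Max_ge) (use that in \<open>auto simp: S_def\<close>)
  define M2 where "M2 = mat_mul r M0 (replace_col j q)"
  have M2: "invertible_mat r M2"
    unfolding M2_def by (rule invertible_mat_mul[OF M0 invertible_replace_col[of j r q, OF j(1,2)]])
  have "\<forall>e\<in>Poly_Mapping.keys (lin_subst r (replace_col j q) (lin_subst r M0 f)).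
          mu_ops r M0 a f \<le> weight r a e"
    by (rule weight_lin_subst_ge)
      (use j_max in \<open>auto simp: replace_col_def id_mat_def mu_ops_def mu_diag_le_weight split: if_splits\<close>)
  then have weights: "\<forall>e\<in>Poly_Mapping.keys (lin_subst r M2 f). mu_ops r M0 a f \<le> weight r a e"
    by (simp add: M2_def lin_subst_lin_subst)
  have "M2 l j = M1 l 0" if "l \<le> r" for l
    using M0q[OF that] col that by (simp add: M2_def mat_mul_def replace_col_def)
  then have "var_degree j (lin_subst r M2 f) \<le> var_degree 0 (lin_subst r M1 f)"
    by (intro var_degree_lin_subst_same_col[OF M1]) auto
  also have "\<dots> = d - mult_at r d f p"
    using n var_degree_le_homog[OF homog_form_lin_subst[OF f M1], of 0] by simp
  finally show ?thesis using that M2 j(1) weights by blast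
qed

text \<open>Weights \<open>(1,\<dots>,1,-r,1,\<dots>,1)\<close>, with \<open>-r\<close> at position \<open>j\<close>: on a form of degree \<open>d\<close> they are
  \<open>d - (r+1) deg\<^sub>x\<^sub>j\<close>, so they detect the multiplicity at \<open>e\<^sub>j\<close>.\<close>

definition cone_onepar :: "nat \<Rightarrow> nat \<Rightarrow> nat \<Rightarrow> int" where
  "cone_onepar r j i = (if i = j then - int r else 1)"

lemma sum_cone_onepar:
  assumes "j \<le> r"
  shows "(\<Sum>i\<le>r. cone_onepar r j i) = 0"
proof -
  have "(\<Sum>i\<le>r. cone_onepar r j i) = (\<Sum>i\<le>r. 1 - (if i = j then int r + 1 else 0))"
    unfolding cone_onepar_def by (rule sum.cong) auto
  then show ?thesis using assms by (simp add: sum_subtractf)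
qed

lemma sum_mult_cone_onepar:
  assumes "j \<le> r" "(\<Sum>i\<le>r. a i) = 0"
  shows "(\<Sum>i\<le>r. a i * cone_onepar r j i) = - (int r + 1) * a j"
proof -
  have "(\<Sum>i\<le>r. a i * cone_onepar r j i) = (\<Sum>i\<le>r. a i - (if i = j then (int r + 1) * a j else 0))"
    unfolding cone_onepar_def by (rule sum.cong) (auto simp: algebra_simps)
  then show ?thesis using assms by (simp add: sum_subtractf algebra_simps)
qed

lemma weight_cone_onepar:
  assumes "j \<le> r"
  shows "weight r (cone_onepar r j) e
           = (\<Sum>i\<le>r. int (Poly_Mapping.lookup e i)) - (int r + 1) * Poly_Mapping.lookup e j"
proof -
  have "weight r (cone_onepar r j) e
          = (\<Sum>i\<le>r. int (Poly_Mapping.lookup e i) - (if i = j then (int r + 1) * Poly_Mapping.lookup e j else 0))"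
    unfolding weight_def cone_onepar_def by (rule sum.cong) (auto simp: algebra_simps)
  then show ?thesis using assms by (simp add: sum_subtractf)
qed

lemma mu_diag_tilt_ge:
  assumes g: "homog_form r d g" and j: "j \<le> r" and t: "t \<ge> 0" and n: "n \<le> d"
    and weights: "\<forall>e\<in>Poly_Mapping.keys g. m \<le> weight r a e"
    and deg: "var_degree j g \<le> d - n"
  shows "t * m + (int (r + 1) * int n - int r * int d)
           \<le> mu_diag r (\<lambda>i. t * a i + cone_onepar r j i) g"
  unfolding mu_diag_def
proof (subst Min_ge_iff, safe)
  fix e assume e: "e \<in> Poly_Mapping.keys g"
  have "t * m \<le> t * weight r a e" using weights e t by (simp add: mult_left_mono)
  moreover have "(\<Sum>i\<le>r. int (Poly_Mapping.lookup e i)) = int d"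
    using g e unfolding homog_form_def by (simp flip: of_nat_sum)
  moreover have "(int r + 1) * Poly_Mapping.lookup e j \<le> (int r + 1) * (int d - int n)"
    using lookup_le_var_degree[OF e, of j] deg n by (intro mult_left_mono) auto
  ultimately show "t * m + (int (r + 1) * int n - int r * int d)
      \<le> weight r (\<lambda>i. t * a i + cone_onepar r j i) e"
    by (simp add: weight_tilt weight_cone_onepar[OF j] algebra_simps)
qed (use g in \<open>auto simp: homog_form_def\<close>)

lemma nontriv_onepar_tilt:
  assumes a: "nontriv_onepar r a" and b: "(\<Sum>i\<le>r. b i) = 0" "\<And>i. i \<le> r \<Longrightarrow> \<bar>b i\<bar> < t"
  shows "nontriv_onepar r (\<lambda>i. t * a i + b i)"
proof -
  obtain i where i: "i \<le> r" "a i \<noteq> 0" using a by (auto simp: nontriv_onepar_def)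
  have t: "0 < t" using b(2)[OF i(1)] by linarith
  have "t * 1 \<le> t * \<bar>a i\<bar>" using i(2) t by (intro mult_left_mono) auto
  then have "t \<le> \<bar>t * a i\<bar>" using t by (simp add: abs_mult)
  then have "t * a i + b i \<noteq> 0" using b(2)[OF i(1)] by linarith
  then show ?thesis
    using a b(1) i(1) by (auto simp: nontriv_onepar_def sum.distrib simp flip: sum_distrib_left)
qed

lemma sq_le_of_mu_ratio_le:
  assumes a: "nontriv_onepar r a" and a': "nontriv_onepar r a'"
    and ratio: "mu_ratio r M' a' f \<le> mu_ratio r M a f"
    and L: "0 \<le> L" "L \<le> mu_ops r M' a' f"
  shows "L\<^sup>2 * (\<Sum>i\<le>r. (a i)\<^sup>2) \<le> (mu_ops r M a f)\<^sup>2 * (\<Sum>i\<le>r. (a' i)\<^sup>2)"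
proof -
  define \<nu> \<nu>' where "\<nu> = onepar_norm r a" and "\<nu>' = onepar_norm r a'"
  have pos: "\<nu> > 0" "\<nu>' > 0" unfolding \<nu>_def \<nu>'_def using onepar_norm_pos a a' by auto
  have "of_int L / \<nu>' \<le> of_int (mu_ops r M' a' f) / \<nu>'"
    using L(2) pos by (simp add: divide_right_mono)
  also have "\<dots> \<le> of_int (mu_ops r M a f) / \<nu>"
    using ratio by (simp add: mu_ratio_def \<nu>_def \<nu>'_def)
  finally have "of_int L * \<nu> \<le> of_int (mu_ops r M a f) * \<nu>'"
    using pos by (simp add: field_simps)
  then have "(of_int L * \<nu>)\<^sup>2 \<le> (of_int (mu_ops r M a f) * \<nu>')\<^sup>2"
    using L(1) pos by (intro power_mono) auto
  then have "real_of_int (L\<^sup>2 * (\<Sum>i\<le>r. (a i)\<^sup>2)) \<le> of_int ((mu_ops r M a f)\<^sup>2 * (\<Sum>i\<le>r. (a' i)\<^sup>2))"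
    using onepar_norm_sq[of r a] onepar_norm_sq[of r a']
    by (simp add: power_mult_distrib \<nu>_def \<nu>'_def)
  then show ?thesis by (simp only: of_int_le_iff)
qed

text \<open>Comparing the coefficients of \<open>t\<close> in a quadratic inequality valid for all large \<open>t\<close>.\<close>

lemma linear_coeff_le_of_eventually_sq_le:
  fixes m K s P Q T :: int
  assumes m: "m \<ge> 1" and s: "s \<ge> 0"
    and H: "\<And>t. t > T \<Longrightarrow> (t * m + K)\<^sup>2 * s \<le> m\<^sup>2 * (t\<^sup>2 * s + 2 * t * P + Q)"
  shows "K * s \<le> m * P"
proof (rule ccontr)
  assume "\<not> ?thesis"
  then have D: "K * s - m * P \<ge> 1" by simp
  define t where "t = max (max T (m\<^sup>2 * Q)) 0 + 1"
  have t: "t > T" "t > m\<^sup>2 * Q" "t \<ge> 1" by (auto simp: t_def)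
  have "2 * t * m * (K * s) + K\<^sup>2 * s \<le> 2 * t * m * (m * P) + m\<^sup>2 * Q"
    using H[OF t(1)] by (simp add: power2_eq_square algebra_simps)
  moreover have "K\<^sup>2 * s \<ge> 0" using s by simp
  ultimately have "2 * t * (m * (K * s - m * P)) \<le> m\<^sup>2 * Q" by (simp add: algebra_simps)
  moreover have "m * (K * s - m * P) \<ge> 1" using m D by (metis mult_mono' mult_1 zero_le_one)
  then have "t * (m * (K * s - m * P)) \<ge> t" using t(3) by (metis mult.right_neutral mult_left_mono zero_le_one order_trans)
  ultimately show False using t by linarith
qed

lemma sum_sq_tilt:
  "(\<Sum>i\<le>r. (t * a i + b i)\<^sup>2)
     = t\<^sup>2 * (\<Sum>i\<le>r. (a i)\<^sup>2) + 2 * t * (\<Sum>i\<le>r. a i * b i) + (\<Sum>i\<le>r. (b i)\<^sup>2)"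
  for t :: int
  by (simp add: power2_eq_square sum.distrib sum_distrib_left algebra_simps)

definition mu_ratio_maximal :: "nat \<Rightarrow> 'k::field mpoly \<Rightarrow> (nat \<Rightarrow> nat \<Rightarrow> 'k) \<Rightarrow> (nat \<Rightarrow> int) \<Rightarrow> bool" where
  "mu_ratio_maximal r f M a \<longleftrightarrow>
     (\<forall>M' a'. invertible_mat r M' \<and> nontriv_onepar r a' \<longrightarrow> mu_ratio r M' a' f \<le> mu_ratio r M a f)"

lemma mult_at_upper_bound_int:
  assumes f: "homog_form r d f" and M0: "invertible_mat r M0" and a: "nontriv_onepar r a"
    and max: "mu_ratio_maximal r f M0 a"
    and m: "mu_ops r M0 a f \<ge> 1" and p: "\<exists>i\<le>r. p i \<noteq> 0"
  shows "(int (r + 1) * int (mult_at r d f p) - int r * int d) * (\<Sum>i\<le>r. (a i)\<^sup>2)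
           \<le> - (int r + 1) * mu_ops r M0 a f * Min (a ` {..r})"
proof -
  obtain M2 j where M2: "invertible_mat r M2" and j: "j \<le> r"
    and weights: "\<forall>e\<in>Poly_Mapping.keys (lin_subst r M2 f). mu_ops r M0 a f \<le> weight r a e"
    and deg: "var_degree j (lin_subst r M2 f) \<le> d - mult_at r d f p"
    using exists_subst_low_var_degree[OF f M0 p] by blast
  define m n where "m = mu_ops r M0 a f" and "n = mult_at r d f p"
  have n: "n \<le> d" unfolding n_def by (rule mult_at_le_degree[OF f p])
  define K where "K = int (r + 1) * int n - int r * int d"
  define b where "b = cone_onepar r j"
  define s P Q where "s = (\<Sum>i\<le>r. (a i)\<^sup>2)" and "P = (\<Sum>i\<le>r. a i * b i)" and "Q = (\<Sum>i\<le>r. (b i)\<^sup>2)"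
  have P: "P = - (int r + 1) * a j"
    unfolding P_def b_def using sum_mult_cone_onepar[OF j] a by (simp add: nontriv_onepar_def)
  have "K * s \<le> m * P"
  proof (rule linear_coeff_le_of_eventually_sq_le)
    fix t assume t: "t > int r * int d + int r + 1"
    have rd: "0 \<le> int r * int d" by simp
    with t have tr: "int r + 1 < t" by linarith
    then have t0: "0 < t" by linarith
    then have "t \<le> t * m" using m unfolding m_def by (simp add: mult_le_cancel_left1)
    moreover have "0 \<le> int (r + 1) * int n" by simp
    ultimately have L: "0 \<le> t * m + K" using t unfolding K_def by linarith
    have mu_t: "t * m + K \<le> mu_ops r M2 (\<lambda>i. t * a i + b i) f"
      unfolding mu_ops_def[of r M2] K_def b_def m_def
      by (rule mu_diag_tilt_ge[OF homog_form_lin_subst[OF f M2] j _ n weights]) (use t0 deg n_def in auto)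
    have nt: "nontriv_onepar r (\<lambda>i. t * a i + b i)"
      by (rule nontriv_onepar_tilt[OF a]) (use j tr sum_cone_onepar[OF j] in \<open>auto simp: b_def cone_onepar_def\<close>)
    have "(t * m + K)\<^sup>2 * s \<le> m\<^sup>2 * (\<Sum>i\<le>r. (t * a i + b i)\<^sup>2)"
      using sq_le_of_mu_ratio_le[OF a nt _ L mu_t] max M2 nt by (simp add: s_def m_def mu_ratio_maximal_def)
    then show "(t * m + K)\<^sup>2 * s \<le> m\<^sup>2 * (t\<^sup>2 * s + 2 * t * P + Q)"
      by (simp only: sum_sq_tilt s_def P_def Q_def)
  qed (use m in \<open>simp_all add: m_def s_def sum_nonneg\<close>)
  also have "m * P \<le> - (int r + 1) * m * Min (a ` {..r})"
  proof -
    have "Min (a ` {..r}) \<le> a j" using j by simp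
    then have "(int r + 1) * m * Min (a ` {..r}) \<le> (int r + 1) * m * a j"
      using m unfolding m_def by (intro mult_left_mono) auto
    then show ?thesis unfolding P by (simp add: algebra_simps)
  qed
  finally show ?thesis unfolding K_def s_def m_def n_def .
qed

lemma hyp_mult_upper_bound:
  assumes f: "homog_form r d f" and M0: "invertible_mat r M0" and a: "nontriv_onepar r a"
    and max: "mu_ratio_maximal r f M0 a"
    and pos: "mu_ratio r M0 a f > 0"
  shows "real (hyp_mult r d f) \<le> real (r * d) / real (r + 1)
           - mu_ratio r M0 a f * of_int (Min (a ` {..r})) / onepar_norm r a"
proof -
  define \<nu> \<delta> A where "\<nu> = onepar_norm r a" and "\<delta> = mu_ratio r M0 a f" and "A = Min (a ` {..r})"
  have \<nu>: "\<nu> > 0" unfolding \<nu>_def by (rule onepar_norm_pos[OF a])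
  have m: "real_of_int (mu_ops r M0 a f) = \<nu> * \<delta>"
    using \<nu> by (simp add: \<nu>_def \<delta>_def mu_ratio_def)
  have "0 < real_of_int (mu_ops r M0 a f)" unfolding m using \<nu> pos \<delta>_def by simp
  then have "mu_ops r M0 a f \<ge> 1" by simp
  obtain p where p: "\<exists>i\<le>r. p i \<noteq> 0" and hyp: "hyp_mult r d f = mult_at r d f p"
    using hyp_mult_attained[OF f] by blast
  define n where "n = mult_at r d f p"
  have "real_of_int ((int (r + 1) * int n - int r * int d) * (\<Sum>i\<le>r. (a i)\<^sup>2))
          \<le> real_of_int (- (int r + 1) * mu_ops r M0 a f * A)"
    unfolding of_int_le_iff n_def A_def
    by (rule mult_at_upper_bound_int[OF f M0 a max \<open>mu_ops r M0 a f \<ge> 1\<close> p])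
  then have "((real r + 1) * real n - real r * real d) * \<nu> * \<nu> \<le> (- (real r + 1) * \<delta> * of_int A) * \<nu>"
    using onepar_norm_sq[of r a] m unfolding \<nu>_def by (simp add: power2_eq_square algebra_simps)
  then have "((real r + 1) * real n - real r * real d) * \<nu> \<le> - (real r + 1) * \<delta> * of_int A"
    using \<nu> by simp
  moreover have "0 < \<nu> + \<nu> * real r" using \<nu> by (simp add: add_pos_nonneg)
  ultimately show ?thesis
    using \<nu> unfolding hyp n_def[symmetric] \<delta>_def[symmetric] \<nu>_def[symmetric] A_def[symmetric]
    by (simp add: field_simps)
qed

theorem theorem4p3:
  fixes f :: "'k::alg_closed_field mpoly" and r d :: nat and a :: "nat \<Rightarrow> int" and \<delta> :: real
  assumes "r \<ge> 1" and "d \<ge> 1"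
    and "homog_form r d f"
    and "unstable r f"
    and "(\<Sum>i\<le>r. a i) = 0" and "indivisible r a"
    and "\<delta> > 0"
    and "in_stratum r f a \<delta>"
  shows "(onepar_norm r a * \<delta> - of_int (Min (a ` {..r})) * real d)
            / of_int (Max (a ` {..r}) - Min (a ` {..r})) \<le> real (hyp_mult r d f)
      \<and> real (hyp_mult r d f) \<le> real (r * d) / real (r + 1)
            - \<delta> * of_int (Min (a ` {..r})) / onepar_norm r a"
proof -
  obtain M where a: "nontriv_onepar r a" and M: "invertible_mat r M"
    and max: "mu_ratio_maximal r f M a" and \<delta>: "mu_ratio r M a f = \<delta>"
    using \<open>in_stratum r f a \<delta>\<close> unfolding in_stratum_def mu_ratio_maximal_def by blast
  show ?thesis
    using hyp_mult_lower_bound[OF \<open>homog_form r d f\<close> M a]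
      hyp_mult_upper_bound[OF \<open>homog_form r d f\<close> M a max] \<open>\<delta> > 0\<close>
    unfolding \<delta> by blast
qed

end
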